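(* For every integer $T=6k+3$ with $k\ge 1$ and every $\sigma\in\mathfrak S_3$, the vector $\sigma c$ with $c=[5k+2,\,2k+1,\,-4k-1,\,-k,\,-k,\,2k+1]$ defines a facet of $P^T$.
   Context: For an integer $T\ge 2$, let $\Omega_T$ be the set of words $w=s_1s_2\cdots s_T$ over $\{1,2,3\}$ with $s_l\neq s_{l+1}$ for $l=1,\dots,T-1$. For $w\in\Omega_T$ and an ordered pair $ij$, $i\neq j$, let $x_{ij}(w)$ be the number of indices $1\le l\le T-1$ with $s_ls_{l+1}=ij$. Vectors of $\mathbb R^6$ are indexed in the order $[x_{12},x_{13},x_{21},x_{23},x_{31},x_{32}]$. Let $a_w=[x_{12}(w),\dots,x_{32}(w)]$ and $P^T=\mathrm{conv}\{a_w:w\in\Omega_T\}$. $\mathfrak S_3$ acts on $\mathbb R^6$ by $(\sigma c)_{ij}=c_{\sigma(i)\sigma(j)}$. A vector $c$ defines a facet of $P^T$ if $c\cdot a_w\ge0$ for all $w\in\Omega_T$ and $\{x\in P^T: c\cdot x=0\}$ is a facet of $P^T$. *)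

theory Defs
  imports "HOL-Analysis.Analysis"
begin

definition Omega :: "nat \<Rightarrow> nat list set" where
  "Omega T = {w. length w = T \<and> set w \<subseteq> {1,2,3} \<and>
                 (\<forall>l. Suc l < T \<longrightarrow> w ! l \<noteq> w ! Suc l)}"

definition xcount :: "nat \<Rightarrow> nat \<Rightarrow> nat list \<Rightarrow> nat" where
  "xcount i j w = card {l. Suc l < length w \<and> w ! l = i \<and> w ! Suc l = j}"

definition vec6 :: "(nat \<Rightarrow> nat \<Rightarrow> real) \<Rightarrow> real ^ 6" where
  "vec6 f = vector [f 1 2, f 1 3, f 2 1, f 2 3, f 3 1, f 3 2]"

definition avec :: "nat list \<Rightarrow> real ^ 6" where
  "avec w = vec6 (\<lambda>i j. real (xcount i j w))"

definition PT :: "nat \<Rightarrow> (real ^ 6) set" where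
  "PT T = convex hull (avec ` Omega T)"

definition act :: "(nat \<Rightarrow> nat) \<Rightarrow> (nat \<Rightarrow> nat \<Rightarrow> real) \<Rightarrow> real ^ 6" where
  "act \<sigma> c = vec6 (\<lambda>i j. c (\<sigma> i) (\<sigma> j))"

definition defines_facet :: "nat \<Rightarrow> real ^ 6 \<Rightarrow> bool" where
  "defines_facet T c \<longleftrightarrow> (\<forall>w \<in> Omega T. c \<bullet> avec w \<ge> 0) \<and>
      {x \<in> PT T. c \<bullet> x = 0} facet_of PT T"

definition cfun :: "nat \<Rightarrow> nat \<Rightarrow> nat \<Rightarrow> real" where
  "cfun k i j =
     (if (i,j) = (1,2) then 5 * real k + 2
      else if (i,j) = (1,3) then 2 * real k + 1
      else if (i,j) = (2,1) then - 4 * real k - 1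
      else if (i,j) = (2,3) then - real k
      else if (i,j) = (3,1) then - real k
      else if (i,j) = (3,2) then 2 * real k + 1
      else 0)"

end

theory Submission
  imports Defs
begin

text \<open>
  Write \<open>a\<^sub>w\<close> through the transition counts \<open>x\<^sub>i\<^sub>j\<close> of \<open>w\<close>. For a word of
  length \<open>6k+3\<close> these satisfy the length equation \<open>\<Sum> x\<^sub>i\<^sub>j = 6k+2\<close>, flow
  conservation at every letter, and, since at most two consecutive transitions avoid
  \<open>{12, 31, 32}\<close>, the bound \<open>x\<^sub>1\<^sub>2 + x\<^sub>3\<^sub>1 + x\<^sub>3\<^sub>2 \<ge> 2k + [w ends in 1]\<close>.
  Eliminating \<open>x\<^sub>1\<^sub>3, x\<^sub>2\<^sub>1, x\<^sub>2\<^sub>3\<close> turns \<open>c \<bullet> a\<^sub>w\<close> into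
  \<open>(3k+1)(x\<^sub>1\<^sub>2 + x\<^sub>3\<^sub>1 + x\<^sub>3\<^sub>2 + [w starts with 1] - [w ends in 1] - 2k) \<ge> 0\<close>.

  With \<open>R = (321)\<^sup>2\<^sup>k\<close>, the words \<open>321R, 212R, 231R, 232R, 21R3\<close> lie on the face and
  have affinely independent count vectors, \<open>121R\<close> lies off it, and \<open>P\<^sup>T\<close> is contained
  in the hyperplane \<open>\<Sum> x\<^sub>i\<^sub>j = T - 1\<close>; so the face has dimension \<open>4 = dim P\<^sup>T - 1\<close>.
  For general \<open>\<sigma>\<close>, relabelling the letters induces a linear isometry of \<open>\<real>\<^sup>6\<close> that
  preserves \<open>P\<^sup>T\<close> and carries the face of \<open>c\<close> onto the face of \<open>\<sigma>c\<close>.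
\<close>

section \<open>Facets of convex hulls\<close>

lemma facet_of_convex_hull_supporting_hyperplane:
  fixes S :: "'a::euclidean_space set"
  assumes nonneg: "\<And>x. x \<in> S \<Longrightarrow> c \<bullet> x \<ge> 0"
    and A: "A \<subseteq> S" "A \<noteq> {}" "\<And>x. x \<in> A \<Longrightarrow> c \<bullet> x = 0"
    and y: "y \<in> S" "c \<bullet> y \<noteq> 0"
    and dim: "aff_dim (convex hull S) \<le> aff_dim A + 1"
  shows "{x \<in> convex hull S. c \<bullet> x = 0} facet_of convex hull S"
proof -
  let ?F = "{x \<in> convex hull S. c \<bullet> x = 0}"
  have "convex hull S \<subseteq> {x. c \<bullet> x \<ge> 0}"
    using nonneg by (intro hull_minimal) (auto simp: convex_halfspace_ge)
  then have face: "?F face_of convex hull S"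
    using face_of_Int_supporting_hyperplane_ge[where S = "convex hull S" and a = c and b = 0]
    by (auto simp: Int_def conj_commute)
  have "A \<subseteq> ?F"
    using A hull_subset[of S convex] by auto
  then have "aff_dim A \<le> aff_dim ?F" and "?F \<noteq> {}"
    using A(2) by (auto simp: aff_dim_subset)
  moreover have "aff_dim ?F < aff_dim (convex hull S)"
    using face y hull_subset[of S convex] by (intro face_of_aff_dim_lt) auto
  ultimately show ?thesis
    using face dim by (simp add: facet_of_def)
qed

lemma aff_dim_insert_translate_independent:
  fixes p :: "'a::euclidean_space"
  assumes "independent D"
  shows "aff_dim (insert p ((+) p ` D)) = int (card D)"
proof -
  have "p \<in> affine hull insert p ((+) p ` D)"
    by (simp add: hull_inc)
  then have "aff_dim (insert p ((+) p ` D)) = int (dim ((+) (- p) ` insert p ((+) p ` D)))"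
    by (rule aff_dim_eq_dim)
  also have "(+) (- p) ` insert p ((+) p ` D) = insert 0 D"
    by (auto simp: image_image)
  also have "dim (insert 0 D) = card D"
    using assms by (simp add: dim_insert dim_eq_card_independent span_zero)
  finally show ?thesis .
qed

section \<open>Coordinates of \<open>\<real>\<^sup>6\<close> indexed by pairs of distinct letters\<close>

lemma exhaust_6:
  fixes x :: 6
  shows "x = 1 \<or> x = 2 \<or> x = 3 \<or> x = 4 \<or> x = 5 \<or> x = 6"
proof (induct x)
  case (of_int z)
  then have "z = 0 \<or> z = 1 \<or> z = 2 \<or> z = 3 \<or> z = 4 \<or> z = 5" by fastforce
  then show ?case by auto
qed

lemma forall_6: "(\<forall>i::6. P i) \<longleftrightarrow> P 1 \<and> P 2 \<and> P 3 \<and> P 4 \<and> P 5 \<and> P 6"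
  by (metis exhaust_6)

lemma sum_6: "sum g (UNIV::6 set) = g 1 + g 2 + g 3 + g 4 + g 5 + g 6"
proof -
  have UNIV_6: "UNIV = {1, 2, 3, 4, 5, 6::6}"
    using exhaust_6 by auto
  show ?thesis
    unfolding UNIV_6 by (simp add: ac_simps)
qed

lemma vector_6 [simp]:
  "(vector [a,b,c,d,e,f] :: 'a::zero ^ 6) $ 1 = a"
  "(vector [a,b,c,d,e,f] :: 'a::zero ^ 6) $ 2 = b"
  "(vector [a,b,c,d,e,f] :: 'a::zero ^ 6) $ 3 = c"
  "(vector [a,b,c,d,e,f] :: 'a::zero ^ 6) $ 4 = d"
  "(vector [a,b,c,d,e,f] :: 'a::zero ^ 6) $ 5 = e"
  "(vector [a,b,c,d,e,f] :: 'a::zero ^ 6) $ 6 = f"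
  unfolding vector_def by simp_all

definition arcs :: "(nat \<times> nat) set" where
  "arcs = {(i, j). i \<in> {1,2,3} \<and> j \<in> {1,2,3} \<and> i \<noteq> j}"

lemma arcs_eq: "arcs = {(1,2), (1,3), (2,1), (2,3), (3,1), (3,2)}"
  by (auto simp: arcs_def)

lemma sum_arcs:
  "(\<Sum>(i, j)\<in>arcs. h i j) = h 1 2 + h 1 3 + h 2 1 + h 2 3 + h 3 1 + h 3 2"
  by (simp add: arcs_eq ac_simps)

lemma vec6_inner: "vec6 f \<bullet> vec6 g = (\<Sum>(i, j)\<in>arcs. f i j * g i j)"
  by (simp add: vec6_def inner_vec_def sum_6 sum_arcs)

lemma inner_vec6_vector:
  "vec6 f \<bullet> vector [a, b, c, d, e, g] = f 1 2 * a + f 1 3 * b + f 2 1 * c + f 2 3 * d + f 3 1 * e + f 3 2 * g"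
  by (simp add: vec6_def inner_vec_def sum_6)

lemma vec6_cong: "(\<And>i j. (i, j) \<in> arcs \<Longrightarrow> f i j = g i j) \<Longrightarrow> vec6 f = vec6 g"
  by (simp add: vec6_def arcs_eq)

lemma vec6_add: "vec6 f + vec6 g = vec6 (\<lambda>i j. f i j + g i j)"
  by (simp add: vec6_def vec_eq_iff forall_6)

lemma vec6_scaleR: "r *\<^sub>R vec6 f = vec6 (\<lambda>i j. r * f i j)"
  by (simp add: vec6_def vec_eq_iff forall_6)

definition coord :: "real ^ 6 \<Rightarrow> nat \<Rightarrow> nat \<Rightarrow> real" where
  "coord x i j =
     (if (i,j) = (1,2) then x $ 1 else if (i,j) = (1,3) then x $ 2
      else if (i,j) = (2,1) then x $ 3 else if (i,j) = (2,3) then x $ 4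
      else if (i,j) = (3,1) then x $ 5 else if (i,j) = (3,2) then x $ 6 else 0)"

lemma vec6_coord [simp]: "vec6 (coord x) = x"
  by (simp add: vec6_def coord_def vec_eq_iff forall_6)

lemma coord_vec6: "(i, j) \<in> arcs \<Longrightarrow> coord (vec6 f) i j = f i j"
  by (auto simp: coord_def vec6_def arcs_eq)

lemma coord_add: "coord (x + y) i j = coord x i j + coord y i j"
  by (simp add: coord_def)

lemma coord_scaleR: "coord (r *\<^sub>R x) i j = r * coord x i j"
  by (simp add: coord_def)

lemma permutes_arcs_iff:
  assumes "\<sigma> permutes {1,2,3}"
  shows "(\<sigma> i, \<sigma> j) \<in> arcs \<longleftrightarrow> (i, j) \<in> arcs"
  using permutes_in_image[OF assms] permutes_inj[OF assms]
  by (auto simp: arcs_def inj_eq simp del: insert_iff)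

lemma sum_arcs_permute:
  assumes "\<sigma> permutes {1,2,3}"
  shows "(\<Sum>(i, j)\<in>arcs. h (\<sigma> i) (\<sigma> j)) = (\<Sum>(i, j)\<in>arcs. h i j)"
proof (rule sum.reindex_bij_witness[where i = "\<lambda>(i, j). (inv \<sigma> i, inv \<sigma> j)"
      and j = "\<lambda>(i, j). (\<sigma> i, \<sigma> j)"])
  have inv: "inv \<sigma> permutes {1,2,3}"
    using assms by (rule permutes_inv)
  show "(\<lambda>(i, j). (\<sigma> i, \<sigma> j)) p \<in> arcs" if "p \<in> arcs" for p
    using that permutes_arcs_iff[OF assms] by (auto split: prod.splits)
  show "(\<lambda>(i, j). (inv \<sigma> i, inv \<sigma> j)) p \<in> arcs" if "p \<in> arcs" for p
    using that permutes_arcs_iff[OF inv] by (auto split: prod.splits)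
  show "(\<lambda>(i, j). (inv \<sigma> i, inv \<sigma> j)) ((\<lambda>(i, j). (\<sigma> i, \<sigma> j)) p) = p"
    and "(\<lambda>(i, j). (\<sigma> i, \<sigma> j)) ((\<lambda>(i, j). (inv \<sigma> i, inv \<sigma> j)) p) = p" for p
    using permutes_inverses[OF assms] by (auto split: prod.splits)
qed auto

lemma inner_act_act:
  assumes "\<sigma> permutes {1,2,3}"
  shows "act \<sigma> f \<bullet> act \<sigma> g = vec6 f \<bullet> vec6 g"
  unfolding act_def vec6_inner
  using sum_arcs_permute[OF assms, of "\<lambda>i j. f i j * g i j"] by simp

definition relabel :: "(nat \<Rightarrow> nat) \<Rightarrow> real ^ 6 \<Rightarrow> real ^ 6" where
  "relabel \<sigma> x = act \<sigma> (coord x)"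

lemma linear_relabel: "linear (relabel \<sigma>)"
  by (rule linearI) (simp_all add: relabel_def act_def coord_add coord_scaleR vec6_add vec6_scaleR)

lemma inner_act_relabel:
  assumes "\<sigma> permutes {1,2,3}"
  shows "act \<sigma> c \<bullet> relabel \<sigma> x = vec6 c \<bullet> x"
  using inner_act_act[OF assms] by (simp add: relabel_def)

lemma inj_relabel:
  assumes "\<sigma> permutes {1,2,3}"
  shows "inj (relabel \<sigma>)"
proof -
  have "x = 0" if "relabel \<sigma> x = 0" for x
    using inner_act_relabel[OF assms, of "coord x" x] that by (simp add: relabel_def)
  then show ?thesis
    using linear_relabel linear_injective_0 by blast
qed

section \<open>Transition counts and the relabelling symmetry\<close>

fun count_pairs :: "nat \<Rightarrow> nat \<Rightarrow> nat list \<Rightarrow> nat" where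
  "count_pairs i j (a # b # w) = of_bool (a = i \<and> b = j) + count_pairs i j (b # w)"
| "count_pairs i j _ = 0"

lemma xcount_eq_count_pairs: "xcount i j w = count_pairs i j w"
proof (induction i j w rule: count_pairs.induct)
  case (1 i j a b w)
  let ?A = "{l. Suc l < length (b # w) \<and> (b # w) ! l = i \<and> (b # w) ! Suc l = j}"
  have positions: "{l. Suc l < length (a # b # w) \<and> (a # b # w) ! l = i \<and> (a # b # w) ! Suc l = j}
      = (if a = i \<and> b = j then {0} else {}) \<union> Suc ` ?A"
  proof (rule set_eqI)
    fix l
    show "l \<in> {l. Suc l < length (a # b # w) \<and> (a # b # w) ! l = i \<and> (a # b # w) ! Suc l = j}
        \<longleftrightarrow> l \<in> (if a = i \<and> b = j then {0} else {}) \<union> Suc ` ?A"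
      by (cases l) auto
  qed
  have "finite ?A"
    by (rule finite_subset[of _ "{..<length (b # w)}"]) auto
  then have "card ((if a = i \<and> b = j then {0} else {}) \<union> Suc ` ?A)
      = of_bool (a = i \<and> b = j) + card ?A"
    by (subst card_Un_disjoint) (auto simp: card_image)
  then show ?case
    using 1 unfolding xcount_def positions by simp
qed (simp_all add: xcount_def)

lemma Omega_iff: "w \<in> Omega T \<longleftrightarrow> length w = T \<and> set w \<subseteq> {1,2,3} \<and> distinct_adj w"
  by (auto simp: Omega_def distinct_adj_conv_nth)

lemma count_pairs_append:
  "count_pairs i j (u @ v) = count_pairs i j u + count_pairs i j v
     + of_bool (u \<noteq> [] \<and> v \<noteq> [] \<and> last u = i \<and> hd v = j)"
proof (induction i j u rule: count_pairs.induct)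
  case ("2_2" i j a)
  then show ?case
    by (cases v) auto
qed simp_all

lemma count_pairs_Cons:
  "count_pairs i j (a # w) = of_bool (w \<noteq> [] \<and> a = i \<and> hd w = j) + count_pairs i j w"
  by (cases w) auto

lemma count_pairs_map: "inj f \<Longrightarrow> count_pairs (f i) (f j) (map f w) = count_pairs i j w"
  by (induction i j w rule: count_pairs.induct) (auto dest: injD)

lemma count_pairs_diag: "distinct_adj w \<Longrightarrow> count_pairs i i w = 0"
  by (induction i i w rule: count_pairs.induct) auto

lemma avec_eq: "avec w = vec6 (\<lambda>i j. real (count_pairs i j w))"
  by (simp add: avec_def xcount_eq_count_pairs)

lemma Omega_map:
  assumes "\<sigma> permutes {1,2,3}" and "w \<in> Omega T"
  shows "map \<sigma> w \<in> Omega T"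
  using assms permutes_in_image[OF assms(1)] permutes_inj[OF assms(1)]
  by (auto simp: Omega_iff distinct_adj_map_iff inj_on_subset)

lemma relabel_avec:
  assumes "\<sigma> permutes {1,2,3}"
  shows "relabel \<sigma> (avec w) = avec (map (inv \<sigma>) w)"
proof -
  have "count_pairs (\<sigma> i) (\<sigma> j) w = count_pairs i j (map (inv \<sigma>) w)" for i j
    using count_pairs_map[OF permutes_inj[OF permutes_inv[OF assms]], of "\<sigma> i" "\<sigma> j" w]
    by (simp add: permutes_inverses[OF assms])
  then show ?thesis
    unfolding relabel_def act_def avec_eq
    by (intro vec6_cong) (simp add: coord_vec6 permutes_arcs_iff[OF assms])
qed

lemma relabel_avec_Omega:
  assumes "\<sigma> permutes {1,2,3}"
  shows "relabel \<sigma> ` avec ` Omega T = avec ` Omega T"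
proof (intro equalityI subsetI)
  have inv: "inv \<sigma> permutes {1,2,3}"
    using assms by (rule permutes_inv)
  fix x
  show "x \<in> avec ` Omega T" if "x \<in> relabel \<sigma> ` avec ` Omega T"
    using that Omega_map[OF inv] by (auto simp: relabel_avec[OF assms])
  show "x \<in> relabel \<sigma> ` avec ` Omega T" if x: "x \<in> avec ` Omega T"
  proof -
    obtain w where "w \<in> Omega T" and "x = avec w"
      using x by blast
    then have "map \<sigma> w \<in> Omega T" and "x = relabel \<sigma> (avec (map \<sigma> w))"
      by (simp_all add: Omega_map[OF assms] relabel_avec[OF assms] permutes_inverses[OF assms] o_def)
    then show ?thesis
      by blast
  qed
qed

lemma defines_facet_act:
  assumes \<sigma>: "\<sigma> permutes {1,2,3}" and facet: "defines_facet T (vec6 c)"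
  shows "defines_facet T (act \<sigma> c)"
proof -
  let ?L = "relabel \<sigma>"
  let ?F = "{x \<in> PT T. vec6 c \<bullet> x = 0}"
  have lin: "linear ?L" and inj: "inj ?L"
    by (simp_all add: linear_relabel inj_relabel[OF \<sigma>])
  have PT_image: "?L ` PT T = PT T"
    unfolding PT_def convex_hull_linear_image[OF lin] relabel_avec_Omega[OF \<sigma>] ..
  have "{x \<in> ?L ` PT T. act \<sigma> c \<bullet> x = 0} = ?L ` ?F"
    by (auto simp: inner_act_relabel[OF \<sigma>])
  then have face_image: "{x \<in> PT T. act \<sigma> c \<bullet> x = 0} = ?L ` ?F"
    by (simp only: PT_image)
  have "act \<sigma> c \<bullet> avec w \<ge> 0" if "w \<in> Omega T" for w
  proof -
    have "avec w = ?L (avec (map \<sigma> w))"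
      by (simp add: relabel_avec[OF \<sigma>] permutes_inverses[OF \<sigma>] o_def)
    then have "act \<sigma> c \<bullet> avec w = vec6 c \<bullet> avec (map \<sigma> w)"
      by (simp add: inner_act_relabel[OF \<sigma>])
    then show ?thesis
      using facet Omega_map[OF \<sigma> that] by (simp add: defines_facet_def)
  qed
  moreover have "?L ` ?F facet_of ?L ` PT T"
    using facet by (simp add: defines_facet_def facet_of_def face_of_linear_image[OF lin inj]
        aff_dim_injective_linear_image[OF lin inj])
  ultimately show ?thesis
    by (simp add: defines_facet_def face_image PT_image)
qed

section \<open>Validity of the inequality\<close>

lemma sum_count_pairs:
  assumes "set w \<subseteq> {1,2,3}" and "distinct_adj w" and "w \<noteq> []"
  shows "(\<Sum>(i, j)\<in>arcs. count_pairs i j w) + 1 = length w"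
  using assms by (induction w rule: induct_list012) (auto simp: sum_arcs)

lemma flow_count_pairs:
  assumes "set w \<subseteq> {1,2,3}" and "w \<noteq> []"
  shows "count_pairs v 1 w + count_pairs v 2 w + count_pairs v 3 w + of_bool (last w = v)
       = count_pairs 1 v w + count_pairs 2 v w + count_pairs 3 v w + of_bool (hd w = v)"
  using assms
proof (induction w rule: induct_list012)
  case (3 a b w)
  have "a \<in> {1,2,3}" and "b \<in> {1,2,3}"
    using "3.prems"(1) by auto
  then have "of_bool (a = v \<and> b = 1) + of_bool (a = v \<and> b = 2) + of_bool (a = v \<and> b = 3)
      = (of_bool (a = v) :: nat)"
    and "of_bool (a = 1 \<and> b = v) + of_bool (a = 2 \<and> b = v) + of_bool (a = 3 \<and> b = v)
      = (of_bool (b = v) :: nat)"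
    by auto
  with "3.IH"(2) "3.prems"(1) show ?case
    by simp
qed simp_all

text \<open>The offset bounds a trailing run of transitions outside \<open>{12, 31, 32}\<close>: only
  \<open>21\<close>, \<open>13\<close>, \<open>23\<close> qualify, and a \<open>3\<close> is never left by one of them.\<close>

lemma length_le_count_pairs:
  assumes "set w \<subseteq> {1,2,3}" and "distinct_adj w"
  shows "length w \<le> 3 * (count_pairs 1 2 w + count_pairs 3 1 w + count_pairs 3 2 w)
      + (if last w = 1 then 1 else if last w = 3 then 2 else 0) + 1"
  using assms
proof (induction w rule: rev_induct)
  case (snoc x xs)
  show ?case
  proof (cases "xs = []")
    case False
    then have "last xs \<noteq> x"
      using snoc.prems by (simp add: distinct_adj_append_iff)
    moreover have "last xs \<in> {1,2,3}" and "x \<in> {1,2,3}"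
      using snoc.prems last_in_set[OF False] by auto
    moreover have "length xs \<le> 3 * (count_pairs 1 2 xs + count_pairs 3 1 xs + count_pairs 3 2 xs)
        + (if last xs = 1 then 1 else if last xs = 3 then 2 else 0) + 1"
      using snoc by (auto simp: distinct_adj_append_iff)
    ultimately show ?thesis
      using False by (auto simp: count_pairs_append split: if_splits)
  qed simp
qed simp

lemma inner_cfun_avec:
  "vec6 (cfun k) \<bullet> avec w =
     (5 * real k + 2) * count_pairs 1 2 w + (2 * real k + 1) * count_pairs 1 3 w
     - (4 * real k + 1) * count_pairs 2 1 w - real k * count_pairs 2 3 w
     - real k * count_pairs 3 1 w + (2 * real k + 1) * count_pairs 3 2 w"
  by (simp add: avec_eq vec6_inner sum_arcs cfun_def algebra_simps)

lemma inner_cfun_avec_nonneg: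
  assumes "w \<in> Omega (6 * k + 3)"
  shows "vec6 (cfun k) \<bullet> avec w \<ge> 0"
proof -
  have w: "length w = 6 * k + 3" "set w \<subseteq> {1,2,3}" "distinct_adj w"
    using assms by (simp_all add: Omega_iff)
  then have "w \<noteq> []"
    by auto
  define a b d e f g where "a = count_pairs 1 2 w" and "b = count_pairs 1 3 w"
    and "d = count_pairs 2 1 w" and "e = count_pairs 2 3 w"
    and "f = count_pairs 3 1 w" and "g = count_pairs 3 2 w"
  define h1 l1 h3 l3 :: nat where "h1 = of_bool (hd w = 1)" and "l1 = of_bool (last w = 1)"
    and "h3 = of_bool (hd w = 3)" and "l3 = of_bool (last w = 3)"
  have total: "a + b + d + e + f + g + 1 = 6 * k + 3"
    using sum_count_pairs[OF w(2,3) \<open>w \<noteq> []\<close>] w(1)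
    by (simp add: sum_arcs a_def b_def d_def e_def f_def g_def)
  have flow1: "a + b + l1 = d + f + h1"
    using flow_count_pairs[OF w(2) \<open>w \<noteq> []\<close>, of 1] count_pairs_diag[OF w(3), of 1]
    by (simp add: a_def b_def d_def f_def h1_def l1_def)
  have flow3: "f + g + l3 = b + e + h3"
    using flow_count_pairs[OF w(2) \<open>w \<noteq> []\<close>, of 3] count_pairs_diag[OF w(3), of 3]
    by (simp add: b_def e_def f_def g_def h3_def l3_def)
  have good: "a + f + g \<ge> 2 * k + l1"
    using length_le_count_pairs[OF w(2,3)] w(1)
    by (auto simp: a_def f_def g_def l1_def split: if_splits)
  have "vec6 (cfun k) \<bullet> avec w
      = (3 * real k + 1) * (real (a + f + g + h1) - real l1 - 2 * real k)"
  proof -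
    have d: "real d = real a + b + l1 - f - h1" and e: "real e = real f + g + l3 - b - h3"
      using arg_cong[OF flow1, of real] arg_cong[OF flow3, of real] by simp_all
    have b: "real b = 6 * real k + 2 - 2 * real a - f - 2 * real g + h1 - l1 + h3 - l3"
      using arg_cong[OF total, of real] d e by simp
    show ?thesis
      unfolding inner_cfun_avec a_def[symmetric] b_def[symmetric] d_def[symmetric]
        e_def[symmetric] f_def[symmetric] g_def[symmetric] d e b
      by (simp add: algebra_simps)
  qed
  also have "\<dots> \<ge> 0"
    using good by simp
  finally show ?thesis .
qed

section \<open>The face for the identity permutation\<close>

fun rep321 :: "nat \<Rightarrow> nat list" where
  "rep321 0 = []"
| "rep321 (Suc n) = [3,2,1] @ rep321 n"

lemma length_rep321 [simp]: "length (rep321 n) = 3 * n"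
  by (induction n) auto

lemma set_rep321: "set (rep321 n) \<subseteq> {1,2,3}"
  by (induction n) auto

lemma rep321_Suc_neq_Nil [simp]: "rep321 (Suc n) \<noteq> []"
  by simp

lemma hd_rep321 [simp]: "hd (rep321 (Suc n)) = 3"
  by simp

lemma last_rep321 [simp]: "last (rep321 (Suc n)) = 1"
  by (induction n) auto

lemma distinct_adj_rep321 [simp]: "distinct_adj (rep321 n)"
proof (induction n)
  case (Suc n)
  then show ?case
    by (cases n) (auto simp: distinct_adj_Cons)
qed simp

lemma count_pairs_rep321:
  "count_pairs i j (rep321 (Suc n))
     = Suc n * (of_bool ((i, j) = (3, 2)) + of_bool ((i, j) = (2, 1))) + n * of_bool ((i, j) = (1, 3))"
  by (induction n) (auto simp: count_pairs_append algebra_simps)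

lemma avec_witness_words:
  fixes n :: nat
  defines "R \<equiv> rep321 (Suc n)"
  shows "avec ([3,2,1] @ R) = vector [0, real n + 1, real n + 2, 0, 0, real n + 2]"
    and "avec ([2,1,2] @ R) = vector [1, real n, real n + 2, 1, 0, real n + 1]"
    and "avec ([2,3,1] @ R) = vector [0, real n + 1, real n + 1, 1, 1, real n + 1]"
    and "avec ([2,3,2] @ R) = vector [0, real n, real n + 1, 2, 0, real n + 2]"
    and "avec ([2,1] @ R @ [3]) = vector [0, real n + 2, real n + 2, 0, 0, real n + 1]"
    and "avec ([1,2,1] @ R) = vector [1, real n + 1, real n + 2, 0, 0, real n + 1]"
  unfolding R_def avec_eq vec6_def
  by (simp_all add: count_pairs_Cons count_pairs_append count_pairs_rep321 ac_simps del: rep321.simps)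

lemma aff_dim_PT_le:
  assumes "T \<ge> 1"
  shows "aff_dim (PT T) \<le> 5"
proof -
  let ?u = "vec6 (\<lambda>i j. 1)"
  have "?u \<bullet> avec w = real T - 1" if "w \<in> Omega T" for w
  proof -
    have "set w \<subseteq> {1,2,3}" "distinct_adj w" "w \<noteq> []" "length w = T"
      using that assms by (auto simp: Omega_iff)
    from sum_count_pairs[OF this(1-3)] this(4) show ?thesis
      by (simp add: avec_eq vec6_inner sum_arcs flip: of_nat_add)
  qed
  then have "PT T \<subseteq> {x. ?u \<bullet> x = real T - 1}"
    unfolding PT_def by (intro hull_minimal) (auto simp: convex_hyperplane)
  then have "aff_dim (PT T) \<le> aff_dim {x. ?u \<bullet> x = real T - 1}"
    by (rule aff_dim_subset)
  also have "\<dots> = 5"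
  proof -
    have "?u $ 1 \<noteq> 0"
      by (simp add: vec6_def)
    then show ?thesis
      by (subst aff_dim_hyperplane) auto
  qed
  finally show ?thesis .
qed

lemma independent_face_directions:
  "independent {vector [1,-1,0,1,0,-1], vector [0,0,-1,1,1,-1], vector [0,-1,-1,2,0,0],
     vector [0,1,0,0,0,-1] :: real ^ 6}"
  (is "independent {?a, ?b, ?c, ?d}")
proof -
  have distinct: "?a \<noteq> ?b" "?a \<noteq> ?c" "?a \<noteq> ?d" "?b \<noteq> ?c" "?b \<noteq> ?d" "?c \<noteq> ?d"
    by (simp_all add: vec_eq_iff forall_6)
  have "u ?a = 0 \<and> u ?b = 0 \<and> u ?c = 0 \<and> u ?d = 0"
    if "u ?a *\<^sub>R ?a + u ?b *\<^sub>R ?b + u ?c *\<^sub>R ?c + u ?d *\<^sub>R ?d = 0" for u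
    using that by (simp add: vec_eq_iff forall_6)
  then show ?thesis
    using distinct by (auto simp: dependent_finite add.assoc)
qed

lemma defines_facet_cfun:
  assumes "k \<ge> 1"
  shows "defines_facet (6 * k + 3) (vec6 (cfun k))"
proof -
  obtain n where n: "2 * k = Suc n"
    using assms not0_implies_Suc[of "2 * k"] by auto
  then have n_real: "real n = 2 * real k - 1"
    using arg_cong[OF n, of real] by simp
  let ?T = "6 * k + 3" and ?c = "vec6 (cfun k)" and ?R = "rep321 (Suc n)"
  let ?W = "{[3,2,1] @ ?R, [2,1,2] @ ?R, [2,3,1] @ ?R, [2,3,2] @ ?R, [2,1] @ ?R @ [3]}"
  let ?p = "avec ([3,2,1] @ ?R)"
  let ?D = "{vector [1,-1,0,1,0,-1], vector [0,0,-1,1,1,-1], vector [0,-1,-1,2,0,0],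
     vector [0,1,0,0,0,-1] :: real ^ 6}"
  have Omega: "insert ([1,2,1] @ ?R) ?W \<subseteq> Omega ?T"
    using n set_rep321[of "Suc n"]
    by (auto simp: Omega_iff distinct_adj_Cons distinct_adj_append_iff simp del: rep321.simps)
  have "?p + vector [1,-1,0,1,0,-1] = avec ([2,1,2] @ ?R)"
    and "?p + vector [0,0,-1,1,1,-1] = avec ([2,3,1] @ ?R)"
    and "?p + vector [0,-1,-1,2,0,0] = avec ([2,3,2] @ ?R)"
    and "?p + vector [0,1,0,0,0,-1] = avec ([2,1] @ ?R @ [3])"
    unfolding avec_witness_words by (simp_all add: vec_eq_iff forall_6)
  then have "insert ?p ((+) ?p ` ?D) = avec ` ?W"
    by simp
  moreover have "?c \<bullet> x = 0" if "x \<in> avec ` ?W" for x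
    using that unfolding image_insert image_empty avec_witness_words
    by (auto simp: inner_vec6_vector cfun_def n_real algebra_simps)
  moreover have "?c \<bullet> avec ([1,2,1] @ ?R) = 3 * real k + 1"
    unfolding avec_witness_words by (simp add: inner_vec6_vector cfun_def n_real algebra_simps)
  moreover have "aff_dim (insert ?p ((+) ?p ` ?D)) = 4"
    unfolding aff_dim_insert_translate_independent[OF independent_face_directions]
    by (simp add: vec_eq_iff forall_6)
  moreover have "aff_dim (PT ?T) \<le> 5"
    by (simp add: aff_dim_PT_le)
  ultimately have "{x \<in> PT ?T. ?c \<bullet> x = 0} facet_of PT ?T"
    unfolding PT_def using Omega inner_cfun_avec_nonneg
    by (intro facet_of_convex_hull_supporting_hyperplane[where A = "avec ` ?W"
          and y = "avec ([1,2,1] @ ?R)"]) auto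
  then show ?thesis
    by (simp add: defines_facet_def inner_cfun_avec_nonneg)
qed

theorem proposition11:
  fixes k T :: nat and \<sigma> :: "nat \<Rightarrow> nat"
  assumes "k \<ge> 1" and "T = 6 * k + 3" and "\<sigma> permutes {1,2,3}"
  shows "defines_facet T (act \<sigma> (cfun k))"
  using defines_facet_act[OF assms(3) defines_facet_cfun[OF assms(1)]] assms(2) by simp

end
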